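(* Let $e_1,\dots,e_d$ be the standard basis of $\mathbb{R}^d$ and put $w_i=\lambda_i(e_1+\dots+e_i)$ for $i\in[1,d]$, where $\lambda_1\ge\lambda_2\ge\dots\ge\lambda_d>0$. Then the affine hyperplane $\mathcal H$ through $w_1,\dots,w_d$ intersects the set $Q=\lambda_d(e_1+\dots+e_d)-\mathbb{R}_+^d$ only in its boundary $\partial Q$. In particular, the Euclidean distance from $O$ to $\mathcal H$ is at least $\lambda_d$. *)

theory Defs
  imports "HOL-Analysis.Analysis"
begin

definition prefix_ones :: "'n::{finite,linorder} \<Rightarrow> real ^ 'n::{finite,linorder}" where
  "prefix_ones i = (\<chi> j. if j \<le> i then 1 else 0)"

definition wpt :: "('n::{finite,linorder} \<Rightarrow> real) \<Rightarrow> 'n::{finite,linorder} \<Rightarrow> real ^ 'n::{finite,linorder}" where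
  "wpt lam i = lam i *\<^sub>R prefix_ones i"

definition Qset :: "real \<Rightarrow> (real ^ 'n::{finite,linorder}) set" where
  "Qset c = {c *\<^sub>R (\<chi> j. 1) - y | y. \<forall>j. y $ j \<ge> 0}"

end

theory Submission
  imports Defs
begin

text \<open>The hyperplane through the points w_i is {x. n \<bullet> x = 1} for the vector
  n_j = 1/lambda_j - 1/lambda_(j-1) (with 1/lambda_0 = 0): indeed
  n \<bullet> w_i = lambda_i (n_1 + ... + n_i) = 1 by telescoping.  As lambda is decreasing, n is
  nonnegative with n_1 + ... + n_d = 1/lambda_d, so n \<bullet> y \<le> 1 on Q and the hyperplane
  supports Q.  Moreover n \<bullet> x \<le> |x| / lambda_d, so every point of the hyperplane has norm
  at least lambda_d.\<close>

text \<open>g j minus the value of g at the predecessor of j, where the maximum with 0 supplies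
  the value 0 below the least index (for monotone nonnegative g).\<close>

definition increments :: "('a::{finite,linorder} \<Rightarrow> 'b::linordered_ab_group_add) \<Rightarrow> 'a \<Rightarrow> 'b" where
  "increments g j = g j - Max (insert 0 (g ` {..<j}))"

lemma increments_nonneg:
  assumes "mono g" and "\<And>i. 0 \<le> g i"
  shows "0 \<le> increments g j"
  using assms by (auto simp: increments_def mono_def intro!: Max.boundedI)

lemma sum_increments_atMost:
  fixes g :: "'a::{finite,linorder} \<Rightarrow> 'b::linordered_ab_group_add"
  assumes "mono g" and "\<And>i. 0 \<le> g i"
  shows "sum (increments g) {..i} = g i"
proof (induction "card {..<i}" arbitrary: i rule: less_induct)
  case less
  have "{..i} = insert i {..<i}"
    using ivl_disj_un_singleton(2)[of i] by auto
  then have sum_i: "sum (increments g) {..i} = increments g i + sum (increments g) {..<i}"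
    by simp
  show ?case
  proof (cases "{..<i} = {}")
    case True
    then have "increments g i = g i" by (simp add: increments_def)
    with True show ?thesis by (simp add: sum_i)
  next
    case False
    define p where "p = Max {..<i}"
    have "p < i" using Max_in[OF _ False] by (simp add: p_def)
    have "x < i \<longleftrightarrow> x \<le> p" for x
      using \<open>p < i\<close> Max_ge[of "{..<i}" x] unfolding p_def by auto
    then have lessThan_i: "{..<i} = {..p}" by auto
    have "card {..<p} < card {..<i}"
      unfolding lessThan_i by (intro psubset_card_mono) auto
    then have "sum (increments g) {..p} = g p" by (rule less)
    moreover have "Max (insert 0 (g ` {..<i})) = g p"
      using assms by (intro Max_eqI) (auto simp: lessThan_i mono_def)
    ultimately have "increments g i = g i - sum (increments g) {..p}"
      by (simp add: increments_def)
    then show ?thesis by (simp add: sum_i lessThan_i)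
  qed
qed

lemma inner_le_sum_abs_mult_norm:
  fixes a x :: "real ^ 'n"
  shows "a \<bullet> x \<le> (\<Sum>j\<in>UNIV. \<bar>a $ j\<bar>) * norm x"
proof -
  have "a \<bullet> x = (\<Sum>j\<in>UNIV. a $ j * x $ j)" by (simp add: inner_vec_def)
  also have "\<dots> \<le> (\<Sum>j\<in>UNIV. \<bar>a $ j\<bar> * norm x)"
  proof (rule sum_mono)
    fix j
    have "a $ j * x $ j \<le> \<bar>a $ j\<bar> * \<bar>x $ j\<bar>"
      by (simp flip: abs_mult)
    also have "\<dots> \<le> \<bar>a $ j\<bar> * norm x"
      by (intro mult_left_mono component_le_norm_cart abs_ge_zero)
    finally show "a $ j * x $ j \<le> \<bar>a $ j\<bar> * norm x" .
  qed
  finally show ?thesis by (simp add: sum_distrib_right)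
qed

lemma infdist_zero_ge_if_subset_hyperplane:
  fixes a :: "real ^ 'n"
  assumes "H \<subseteq> {x. a \<bullet> x = 1}" and "H \<noteq> {}"
  shows "1 / (\<Sum>j\<in>UNIV. \<bar>a $ j\<bar>) \<le> infdist 0 H"
proof -
  have "1 / (\<Sum>j\<in>UNIV. \<bar>a $ j\<bar>) \<le> dist 0 x" if "x \<in> H" for x
  proof -
    have "1 \<le> (\<Sum>j\<in>UNIV. \<bar>a $ j\<bar>) * norm x"
      using that assms(1) inner_le_sum_abs_mult_norm[of a x] by auto
    moreover from this have "0 < (\<Sum>j\<in>UNIV. \<bar>a $ j\<bar>)"
      by (metis order.not_eq_order_implies_strict mult_zero_left not_one_le_zero sum_abs_ge_zero)
    ultimately show ?thesis
      by (simp add: divide_le_eq mult.commute)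
  qed
  then show ?thesis using assms(2) by (simp add: infdist_notempty cINF_greatest)
qed

lemma frontier_if_supporting_hyperplane:
  fixes a :: "'a::euclidean_space"
  assumes "S \<subseteq> {y. a \<bullet> y \<le> b}" and "a \<noteq> 0" and "x \<in> S" and "a \<bullet> x = b"
  shows "x \<in> frontier S"
proof -
  have "interior S \<subseteq> {y. a \<bullet> y < b}"
    using interior_mono[OF assms(1)] assms(2) by simp
  then show ?thesis
    using assms(3,4) closure_subset by (auto simp: frontier_def)
qed

lemma Qset_subset_halfspace:
  fixes a :: "real ^ 'n::{finite,linorder}"
  assumes "\<And>j. 0 \<le> a $ j"
  shows "Qset c \<subseteq> {y. a \<bullet> y \<le> c * (\<Sum>j\<in>UNIV. a $ j)}"
proof
  fix y :: "real ^ 'n::{finite,linorder}" assume "y \<in> Qset c"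
  then obtain z where y: "y = c *\<^sub>R (\<chi> j. 1) - z" and z: "\<forall>j. 0 \<le> z $ j"
    unfolding Qset_def by blast
  have "0 \<le> a \<bullet> z"
    using assms z by (simp add: inner_vec_def sum_nonneg)
  moreover have "a \<bullet> y = c * (\<Sum>j\<in>UNIV. a $ j) - a \<bullet> z"
    by (simp add: y inner_diff_right inner_vec_def sum_distrib_left right_diff_distrib
        sum_subtractf mult.commute)
  ultimately show "y \<in> {y. a \<bullet> y \<le> c * (\<Sum>j\<in>UNIV. a $ j)}" by simp
qed

definition hyperplane_normal ::
    "('n::{finite,linorder} \<Rightarrow> real) \<Rightarrow> real ^ 'n::{finite,linorder}" where
  "hyperplane_normal lam = (\<chi> j. increments (\<lambda>i. 1 / lam i) j)"

context
  fixes lam :: "'n::{finite,linorder} \<Rightarrow> real"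
  assumes antimono_lam: "\<And>i j. i \<le> j \<Longrightarrow> lam j \<le> lam i"
    and lam_pos: "\<And>i. lam i > 0"
begin

lemma mono_inverse_lam: "mono (\<lambda>i. 1 / lam i)"
  using antimono_lam lam_pos by (auto simp: mono_def intro: frac_le)

lemma hyperplane_normal_nonneg: "0 \<le> hyperplane_normal lam $ j"
  using increments_nonneg[OF mono_inverse_lam] lam_pos
  by (simp add: hyperplane_normal_def less_imp_le)

lemma sum_hyperplane_normal_atMost: "(\<Sum>j\<in>{..i}. hyperplane_normal lam $ j) = 1 / lam i"
  using sum_increments_atMost[OF mono_inverse_lam] lam_pos
  by (simp add: hyperplane_normal_def less_imp_le)

lemma sum_hyperplane_normal: "(\<Sum>j\<in>UNIV. hyperplane_normal lam $ j) = 1 / lam (Max UNIV)"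
proof -
  have "(UNIV :: 'n set) = {..Max UNIV}" by auto
  then show ?thesis by (metis sum_hyperplane_normal_atMost)
qed

lemma inner_hyperplane_normal_wpt: "hyperplane_normal lam \<bullet> wpt lam i = 1"
proof -
  have "hyperplane_normal lam \<bullet> wpt lam i = lam i * (\<Sum>j\<in>{..i}. hyperplane_normal lam $ j)"
    by (simp add: inner_vec_def wpt_def prefix_ones_def sum_distrib_left
        if_distrib[of "\<lambda>t. _ * t"] sum.If_cases atMost_def mult.commute)
  then show ?thesis
    using lam_pos[of i] by (simp add: sum_hyperplane_normal_atMost)
qed

lemma affine_hull_wpt_subset_hyperplane:
  "affine hull (range (wpt lam)) \<subseteq> {x. hyperplane_normal lam \<bullet> x = 1}"
  by (rule hull_minimal) (auto simp: inner_hyperplane_normal_wpt affine_hyperplane)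

end

theorem lemma2p4:
  fixes lam :: "'n::{finite,linorder} \<Rightarrow> real"
  assumes "\<And>i j. i \<le> j \<Longrightarrow> lam j \<le> lam i"
    and "\<And>i. lam i > 0"
  shows "affine hull (range (wpt lam)) \<inter> Qset (lam (Max UNIV)) \<subseteq> frontier (Qset (lam (Max UNIV)))
         \<and> infdist 0 (affine hull (range (wpt lam))) \<ge> lam (Max UNIV)"
proof -
  define c where "c = lam (Max UNIV)"
  define n where "n = hyperplane_normal lam"
  have H: "affine hull (range (wpt lam)) \<subseteq> {x. n \<bullet> x = 1}"
    unfolding n_def using assms by (rule affine_hull_wpt_subset_hyperplane)
  have n_nonneg: "\<And>j. 0 \<le> n $ j"
    unfolding n_def using assms by (rule hyperplane_normal_nonneg)
  have sum_n: "(\<Sum>j\<in>UNIV. n $ j) = 1 / c"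
    unfolding n_def c_def using assms by (rule sum_hyperplane_normal)
  have "c > 0" using assms(2) by (simp add: c_def)
  then have Q: "Qset c \<subseteq> {y. n \<bullet> y \<le> 1}"
    using Qset_subset_halfspace[of n c] n_nonneg sum_n by simp
  have "n \<noteq> 0"
    using sum_n \<open>c > 0\<close> by auto
  then have "affine hull (range (wpt lam)) \<inter> Qset c \<subseteq> frontier (Qset c)"
    using H Q by (auto intro: frontier_if_supporting_hyperplane)
  moreover have "c \<le> infdist 0 (affine hull (range (wpt lam)))"
    using infdist_zero_ge_if_subset_hyperplane[OF H] n_nonneg sum_n by simp
  ultimately show ?thesis by (simp add: c_def)
qed

end
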